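(* Let $x$ be a sequence of length $n$, let $i\in\{1,\ldots,n-1\}$ and $y=\tau(x,i)$. Suppose $x[i]>x[i+1]$. Then: (1) $\overrightarrow{b_y}=1$; (2) $\overleftarrow{b_y}=0$ if $\overleftarrow{a_x}=0$, and $\overleftarrow{b_y}=\overleftarrow{a_x}+1$ otherwise; (3) $\overrightarrow{a_y}=0$ if $\overrightarrow{b_x}=0$, and $\overrightarrow{a_y}=\overrightarrow{b_x}-1$ otherwise; (4) $\overleftarrow{a_y}\le n-i-1$ if $\overleftarrow{a_x}=0$, and $\overleftarrow{a_y}\le\overleftarrow{a_x}$ otherwise.
   Context: Sequences are finite sequences of pairwise distinct integers indexed from $1$. For $1\le i\le n-1$, $\tau(x,i)$ is the sequence obtained from $x$ by exchanging $x[i]$ and $x[i+1]$. The parent-distance table of $x$ is $\overrightarrow{PD}_x[k]=k-\max\{j<k : x[j]<x[k]\}$ if such $j$ exists and $0$ otherwise; the reverse parent-distance table is $\overleftarrow{PD}_x[k]=\min\{j : k<j\le n,\ x[j]<x[k]\}-k$ if such $j$ exists and $0$ otherwise. Notation (for $z\in\{x,y\}$): $\overrightarrow{a_z}=\overrightarrow{PD}_z[i]$, $\overrightarrow{b_z}=\overrightarrow{PD}_z[i+1]$, $\overleftarrow{a_z}=\overleftarrow{PD}_z[i+1]$, $\overleftarrow{b_z}=\overleftarrow{PD}_z[i]$ (in the reverse tables, $a$ refers to position $i+1$ and $b$ to position $i$). *)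

theory Defs
  imports Main
begin

text \<open>Sequences are lists of pairwise distinct integers, indexed from 1:
  the k-th entry x[k] is  nth1 x k = x ! (k - 1).\<close>

definition nth1 :: "int list \<Rightarrow> nat \<Rightarrow> int" where
  "nth1 x k = x ! (k - 1)"

text \<open>tau x i: exchange x[i] and x[i+1] (1-based).\<close>
definition tau :: "int list \<Rightarrow> nat \<Rightarrow> int list" where
  "tau x i = (x[i - 1 := nth1 x (i + 1)])[i := nth1 x i]"

definition PD :: "int list \<Rightarrow> nat \<Rightarrow> nat" where
  "PD x k = (if \<exists>j. 1 \<le> j \<and> j < k \<and> nth1 x j < nth1 x k
             then k - Max {j. 1 \<le> j \<and> j < k \<and> nth1 x j < nth1 x k}
             else 0)"

definition RPD :: "int list \<Rightarrow> nat \<Rightarrow> nat" where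
  "RPD x k = (if \<exists>j. k < j \<and> j \<le> length x \<and> nth1 x j < nth1 x k
              then Min {j. k < j \<and> j \<le> length x \<and> nth1 x j < nth1 x k} - k
              else 0)"

end

theory Submission
  imports Defs
begin

text \<open>Exchanging x[i] > x[i+1] moves the smaller value x[i+1] one step to the left without
  changing the set of smaller entries on either side of it, since x[i] belongs to neither; its
  two parent distances are read off the extrema of these sets and so change by exactly one,
  which gives (2) and (3). (1) holds because the new left neighbour of x[i] is x[i+1], and (4)
  because after moving right x[i] still has every entry smaller than x[i+1] to its right.\<close>

definition smaller_left :: "int list \<Rightarrow> nat \<Rightarrow> nat set" where
  "smaller_left x k = {j. 1 \<le> j \<and> j < k \<and> nth1 x j < nth1 x k}"

definition smaller_right :: "int list \<Rightarrow> nat \<Rightarrow> nat set" where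
  "smaller_right x k = {j. k < j \<and> j \<le> length x \<and> nth1 x j < nth1 x k}"

lemma finite_smaller_left: "finite (smaller_left x k)"
  unfolding smaller_left_def by (rule finite_subset[of _ "{..<k}"]) auto

lemma finite_smaller_right: "finite (smaller_right x k)"
  unfolding smaller_right_def by (rule finite_subset[of _ "{..length x}"]) auto

lemma PD_eq_Max_smaller_left:
  "PD x k = (if smaller_left x k = {} then 0 else k - Max (smaller_left x k))"
  unfolding PD_def smaller_left_def by auto

lemma RPD_eq_Min_smaller_right:
  "RPD x k = (if smaller_right x k = {} then 0 else Min (smaller_right x k) - k)"
  unfolding RPD_def smaller_right_def by auto

lemma RPD_le_length_minus: "RPD x k \<le> length x - k"
proof (cases "smaller_right x k = {}")
  case False
  then have "Min (smaller_right x k) \<in> smaller_right x k"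
    using finite_smaller_right by (rule Min_in[rotated])
  then have "Min (smaller_right x k) \<le> length x" by (simp add: smaller_right_def)
  then show ?thesis using False by (simp add: RPD_eq_Min_smaller_right diff_le_mono)
qed (simp add: RPD_eq_Min_smaller_right)

lemma RPD_mono_smaller_right:
  assumes "smaller_right x k \<subseteq> smaller_right y k" and "smaller_right x k \<noteq> {}"
  shows "RPD y k \<le> RPD x k"
proof -
  have "smaller_right y k \<noteq> {}" using assms by blast
  moreover have "Min (smaller_right y k) \<le> Min (smaller_right x k)"
    using assms finite_smaller_right by (intro Min_antimono)
  ultimately show ?thesis using assms(2) by (simp add: RPD_eq_Min_smaller_right)
qed

lemma PD_Suc_eq_1:
  assumes "1 \<le> i" and "nth1 x i < nth1 x (i + 1)"
  shows "PD x (i + 1) = 1"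
proof -
  have i_in: "i \<in> smaller_left x (i + 1)"
    using assms by (simp add: smaller_left_def)
  then have "Max (smaller_left x (i + 1)) = i"
    using finite_smaller_left by (intro Max_eqI) (auto simp: smaller_left_def)
  with i_in show ?thesis by (auto simp: PD_eq_Max_smaller_left)
qed

lemma PD_eq_PD_Suc_minus_1:
  assumes "smaller_left y i = smaller_left x (i + 1)"
  shows "PD y i = (if PD x (i + 1) = 0 then 0 else PD x (i + 1) - 1)"
proof (cases "smaller_left x (i + 1) = {}")
  case False
  then have "Max (smaller_left x (i + 1)) \<in> smaller_left y i"
    using assms finite_smaller_left by simp
  then have "Max (smaller_left x (i + 1)) < i" by (simp add: smaller_left_def)
  then show ?thesis using assms False by (simp add: PD_eq_Max_smaller_left)
qed (use assms in \<open>simp add: PD_eq_Max_smaller_left\<close>)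

lemma RPD_eq_RPD_Suc_plus_1:
  assumes "smaller_right y i = smaller_right x (i + 1)"
  shows "RPD y i = (if RPD x (i + 1) = 0 then 0 else RPD x (i + 1) + 1)"
proof (cases "smaller_right x (i + 1) = {}")
  case False
  then have "Min (smaller_right x (i + 1)) \<in> smaller_right x (i + 1)"
    using finite_smaller_right by simp
  then have "i + 1 < Min (smaller_right x (i + 1))" by (simp add: smaller_right_def)
  then show ?thesis using assms False by (simp add: RPD_eq_Min_smaller_right)
qed (use assms in \<open>simp add: RPD_eq_Min_smaller_right\<close>)

lemma length_tau [simp]: "length (tau x i) = length x"
  by (simp add: tau_def)

lemma nth1_tau:
  assumes "1 \<le> i" "i < length x" "1 \<le> k" "k \<le> length x"
  shows "nth1 (tau x i) k =
    (if k = i then nth1 x (i + 1) else if k = i + 1 then nth1 x i else nth1 x k)"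
  using assms unfolding tau_def nth1_def by (auto simp: nth_list_update)

context
  fixes x :: "int list" and i :: nat
  assumes i_range: "1 \<le> i" "i < length x"
    and descent: "nth1 x (i + 1) < nth1 x i"
begin

lemma nth1_tau_at: "nth1 (tau x i) i = nth1 x (i + 1)" "nth1 (tau x i) (i + 1) = nth1 x i"
  using nth1_tau[OF i_range] i_range by auto

lemma smaller_left_tau: "smaller_left (tau x i) i = smaller_left x (i + 1)"
  using nth1_tau[OF i_range] nth1_tau_at i_range descent
  by (auto simp: smaller_left_def less_Suc_eq)

lemma smaller_right_tau: "smaller_right (tau x i) i = smaller_right x (i + 1)"
proof (intro set_eqI iffI)
  fix j assume "j \<in> smaller_right (tau x i) i"
  then have j: "i < j" "j \<le> length x" "nth1 (tau x i) j < nth1 x (i + 1)"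
    by (auto simp: smaller_right_def nth1_tau_at)
  then have "j \<noteq> i + 1" using nth1_tau_at descent by auto
  with j show "j \<in> smaller_right x (i + 1)"
    using nth1_tau[OF i_range] by (auto simp: smaller_right_def)
qed (use nth1_tau[OF i_range] nth1_tau_at in \<open>auto simp: smaller_right_def\<close>)

lemma smaller_right_subset_tau: "smaller_right x (i + 1) \<subseteq> smaller_right (tau x i) (i + 1)"
  using nth1_tau[OF i_range] nth1_tau_at descent by (auto simp: smaller_right_def)

end

theorem lemma2:
  fixes x :: "int list" and n i :: nat
  assumes "distinct x" and "length x = n"
    and "1 \<le> i" and "i \<le> n - 1"
    and "nth1 x i > nth1 x (i + 1)"
  defines "y \<equiv> tau x i"
  shows "PD y (i + 1) = 1
    \<and> RPD y i = (if RPD x (i + 1) = 0 then 0 else RPD x (i + 1) + 1)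
    \<and> PD y i = (if PD x (i + 1) = 0 then 0 else PD x (i + 1) - 1)
    \<and> (if RPD x (i + 1) = 0 then RPD y (i + 1) \<le> n - i - 1
          else RPD y (i + 1) \<le> RPD x (i + 1))"
proof -
  have range: "1 \<le> i" "i < length x" using assms(2-4) by auto
  note descent = assms(5)
  have "PD y (i + 1) = 1"
    using PD_Suc_eq_1 range descent nth1_tau_at unfolding y_def by simp
  moreover have "RPD y i = (if RPD x (i + 1) = 0 then 0 else RPD x (i + 1) + 1)"
    using RPD_eq_RPD_Suc_plus_1 smaller_right_tau[OF range descent] unfolding y_def by blast
  moreover have "PD y i = (if PD x (i + 1) = 0 then 0 else PD x (i + 1) - 1)"
    using PD_eq_PD_Suc_minus_1 smaller_left_tau[OF range descent] unfolding y_def by blast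
  moreover have "RPD y (i + 1) \<le> n - i - 1"
    using RPD_le_length_minus[of y "i + 1"] assms(2) by (simp add: y_def)
  moreover have "RPD y (i + 1) \<le> RPD x (i + 1)" if "RPD x (i + 1) \<noteq> 0"
  proof -
    have "smaller_right x (i + 1) \<noteq> {}"
      using that by (auto simp: RPD_eq_Min_smaller_right)
    then show ?thesis
      using RPD_mono_smaller_right smaller_right_subset_tau[OF range descent] y_def by blast
  qed
  ultimately show ?thesis by simp
qed

end
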